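(* Assume (a1)–(a3) with constants $L,\beta$, and suppose in addition that $H$ is twice continuously differentiable with bounded Hessian: there is $M>0$ with $\|\nabla^2H(y)\|_2\le M$ for all $y$. Let $\gamma>0$ and let $\{(x^t,y^t,z^t)\}_{t\ge0}$ be generated by the DYS iteration. Then there exists $\tau>0$ such that for all $t\ge1$, $$\mathrm{dist}\big(0,\partial\Theta_\gamma(x^t,y^t,z^t)\big)\le\tau\,\|y^{t+1}-y^t\|,$$ where $\partial\Theta_\gamma$ is the limiting subdifferential of $\Theta_\gamma$ as a function of $(x,y,z)\in\mathbb{R}^{3n}$.
   Context: Assumptions: (a1) $F:\mathbb{R}^n\to\mathbb{R}$ is differentiable with $L$-Lipschitz gradient; (a2) $G:\mathbb{R}^n\to(-\infty,\infty]$ is proper, lower semicontinuous, and $\arg\min_y\{G(y)+\frac1{2\gamma}\|y-x\|^2\}\neq\emptyset$ for all $x$ and $\gamma>0$; (a3) $H:\mathbb{R}^n\to\mathbb{R}$ is differentiable with $\beta$-Lipschitz gradient. DYS iteration: fix $\gamma>0$, $x^0$; for $t\ge0$, $y^{t+1}\in\arg\min_y\{F(y)+\frac{1}{2\gamma}\|y-x^t\|^2\}$, $z^{t+1}\in\arg\min_z\{G(z)+\frac{1}{2\gamma}\|z-(2y^{t+1}-\gamma\nabla H(y^{t+1})-x^t)\|^2\}$, $x^{t+1}=x^t+(z^{t+1}-y^{t+1})$. Energy function: $\Theta_\gamma(x,y,z)=F(y)+G(z)+H(y)+\tfrac{1}{2\gamma}\|2y-z-x-\gamma\nabla H(y)\|^2-\tfrac{1}{2\gamma}\|x-y+\gamma\nabla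 H(y)\|^2-\tfrac1\gamma\|y-z\|^2$. Limiting subdifferential of a proper $f$ at $x\in\mathrm{dom}f$: $v\in\partial f(x)$ iff there exist $x^k\to x$ with $f(x^k)\to f(x)$ and $v^k\to v$ such that $\liminf_{z\to x^k}\frac{f(z)-f(x^k)-\langle v^k,z-x^k\rangle}{\|z-x^k\|}\ge0$ for each $k$. *)

theory Defs
  imports "HOL-Analysis.Analysis"
begin

text \<open>Extended-real valued functions f :: 'a \<Rightarrow> ereal model functions into (-\<infinity>,+\<infinity>].\<close>

definition proper_fun :: "('a \<Rightarrow> ereal) \<Rightarrow> bool" where
  "proper_fun f \<longleftrightarrow> (\<forall>x. f x \<noteq> -\<infinity>) \<and> (\<exists>x. f x \<noteq> \<infinity>)"

definition lsc_fun :: "('a::topological_space \<Rightarrow> ereal) \<Rightarrow> bool" where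
  "lsc_fun f \<longleftrightarrow> (\<forall>x. f x \<le> Liminf (at x) f)"

definition frechet_subgrad :: "('a::real_inner \<Rightarrow> ereal) \<Rightarrow> 'a \<Rightarrow> 'a \<Rightarrow> bool" where
  "frechet_subgrad f x v \<longleftrightarrow> \<bar>f x\<bar> \<noteq> \<infinity> \<and>
     Liminf (at x) (\<lambda>z. (f z - f x - ereal (v \<bullet> (z - x))) / ereal (norm (z - x))) \<ge> 0"

definition limiting_subdiff :: "('a::real_inner \<Rightarrow> ereal) \<Rightarrow> 'a \<Rightarrow> 'a set" where
  "limiting_subdiff f x = {v. \<bar>f x\<bar> \<noteq> \<infinity> \<and>
     (\<exists>xs vs. xs \<longlonglongrightarrow> x \<and> (\<lambda>k. f (xs k)) \<longlonglongrightarrow> f x \<and> vs \<longlonglongrightarrow> v \<and>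
        (\<forall>k. frechet_subgrad f (xs k) (vs k)))}"

definition Theta :: "('a::euclidean_space \<Rightarrow> real) \<Rightarrow> ('a \<Rightarrow> ereal) \<Rightarrow> ('a \<Rightarrow> real) \<Rightarrow> ('a \<Rightarrow> 'a)
    \<Rightarrow> real \<Rightarrow> 'a \<times> 'a \<times> 'a \<Rightarrow> ereal" where
  "Theta F G H gradH \<gamma> p = (case p of (x, y, z) \<Rightarrow>
     ereal (F y + H y
       + (1 / (2 * \<gamma>)) * (norm (2 *\<^sub>R y - z - x - \<gamma> *\<^sub>R gradH y))\<^sup>2
       - (1 / (2 * \<gamma>)) * (norm (x - y + \<gamma> *\<^sub>R gradH y))\<^sup>2
       - (1 / \<gamma>) * (norm (y - z))\<^sup>2) + G z)"

end

theory Submission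
  imports Defs
begin

(* Write Theta = S + G(z) with S smooth. Optimality of z^t in its proximal step says that G lies
   above a concave quadratic touching it at z^t, so grad S(x^t,y^t,z^t) plus the slope of that
   quadratic is a Frechet subgradient of Theta. Using the optimality of y^t and the update of x,
   this subgradient collapses to ((z-y)/gamma, (y-z)/gamma - Hess H(y)^T (y-z), (y-z)/gamma) with
   y^t - z^t = x^(t-1) - x^t, so its norm is at most (3/gamma + M) |x^t - x^(t-1)|. Finally
   x^k = y^(k+1) + gamma grad F(y^(k+1)) and the L-Lipschitz continuity of grad F give
   |x^t - x^(t-1)| <= (1 + gamma L) |y^(t+1) - y^t|. *)

lemma frechet_subgrad_imp_limiting_subdiff:
  assumes "frechet_subgrad f p v"
  shows "v \<in> limiting_subdiff f p"
proof -
  have "\<bar>f p\<bar> \<noteq> \<infinity>" using assms unfolding frechet_subgrad_def by (rule conjunct1)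
  moreover have "\<exists>xs vs. xs \<longlonglongrightarrow> p \<and> (\<lambda>k. f (xs k)) \<longlonglongrightarrow> f p \<and> vs \<longlonglongrightarrow> v \<and>
      (\<forall>k. frechet_subgrad f (xs k) (vs k))"
    using assms by (intro exI[of _ "\<lambda>k. p"] exI[of _ "\<lambda>k. v"]) simp
  ultimately show ?thesis
    unfolding limiting_subdiff_def by blast
qed

lemma frechet_subgrad_add_quadratic_minorant:
  fixes S :: "'b::{real_inner,perfect_space} \<Rightarrow> real" and R :: "'b \<Rightarrow> ereal"
  assumes S_deriv: "(S has_derivative (\<lambda>h. g \<bullet> h)) (at p)"
    and R_p: "R p = ereal r0"
    and R_minorant: "\<And>q. R q \<ge> ereal (r0 + w \<bullet> (q - p) - c * (norm (q - p))\<^sup>2)"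
  shows "frechet_subgrad (\<lambda>q. ereal (S q) + R q) p (g + w)"
proof -
  define T where "T q = ereal (S q) + R q" for q
  define r where "r q = (S q - S p - g \<bullet> (q - p)) / norm (q - p) - c * norm (q - p)" for q
  have "((\<lambda>q. inverse (norm (q - p)) *\<^sub>R (S q - S p - g \<bullet> (q - p))) \<longlongrightarrow> 0) (at p)"
    using S_deriv by (simp add: has_derivative_at_within)
  then have lim_quotient: "((\<lambda>q. (S q - S p - g \<bullet> (q - p)) / norm (q - p)) \<longlongrightarrow> 0) (at p)"
    by (simp add: divide_inverse mult.commute)
  have "((\<lambda>q. c * norm (q - p)) \<longlongrightarrow> c * norm (p - p)) (at p)"
    by (intro tendsto_intros)
  then have lim_c: "((\<lambda>q. c * norm (q - p)) \<longlongrightarrow> 0) (at p)"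
    by simp
  have "(r \<longlongrightarrow> 0) (at p)"
    unfolding r_def using tendsto_diff[OF lim_quotient lim_c] by simp
  then have "((\<lambda>q. ereal (r q)) \<longlongrightarrow> ereal 0) (at p)"
    by (simp add: lim_ereal)
  then have liminf_r: "Liminf (at p) (\<lambda>q. ereal (r q)) = 0"
    by (subst lim_imp_Liminf) (auto simp: zero_ereal_def)
  have "eventually (\<lambda>q. ereal (r q) \<le> (T q - T p - ereal ((g + w) \<bullet> (q - p))) / ereal (norm (q - p))) (at p)"
    unfolding eventually_at_filter
  proof (intro always_eventually allI impI)
    fix q assume "q \<noteq> p"
    then have n: "norm (q - p) > 0" by simp
    show "ereal (r q) \<le> (T q - T p - ereal ((g + w) \<bullet> (q - p))) / ereal (norm (q - p))"
    proof (cases "R q")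
      case (real rq)
      have rq: "rq \<ge> r0 + w \<bullet> (q - p) - c * (norm (q - p))\<^sup>2"
        using R_minorant[of q] real by simp
      have "r q = (S q - S p - g \<bullet> (q - p) - c * (norm (q - p))\<^sup>2) / norm (q - p)"
        unfolding r_def using n by (simp add: field_simps power2_eq_square)
      also have "\<dots> \<le> (S q + rq - (S p + r0) - (g + w) \<bullet> (q - p)) / norm (q - p)"
        using n rq by (intro divide_right_mono) (simp_all add: inner_add_left)
      finally show ?thesis using real n by (simp add: T_def R_p)
    next
      case PInf
      then show ?thesis using n by (simp add: T_def R_p)
    next
      case MInf
      then show ?thesis using R_minorant[of q] by simp
    qed
  qed
  then show ?thesis
    unfolding frechet_subgrad_def T_def using Liminf_mono liminf_r R_p by fastforce
qed

lemma prox_minimizer_gradient: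
  fixes F :: "'a::real_inner \<Rightarrow> real"
  assumes F_deriv: "(F has_derivative (\<lambda>h. gradF Y \<bullet> h)) (at Y)"
    and gamma_pos: "\<gamma> > 0"
    and minimizer: "\<And>u. F Y + (1 / (2 * \<gamma>)) * (norm (Y - X))\<^sup>2 \<le> F u + (1 / (2 * \<gamma>)) * (norm (u - X))\<^sup>2"
  shows "gradF Y = (1 / \<gamma>) *\<^sub>R (X - Y)"
proof -
  define d where "d = gradF Y - (1 / \<gamma>) *\<^sub>R (X - Y)"
  have deriv: "((\<lambda>u. F u + (1 / (2 * \<gamma>)) * ((u - X) \<bullet> (u - X))) has_derivative (\<lambda>h. d \<bullet> h)) (at Y)"
    unfolding d_def
    apply (rule derivative_eq_intros F_deriv refl | simp)+
    apply (rule ext)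
    using gamma_pos
    by (simp add: inner_diff_left inner_diff_right inner_add_left inner_add_right inner_commute
        field_simps)
  have "(\<lambda>h. d \<bullet> h) = (\<lambda>h. 0)"
    by (rule differential_zero_maxmin[OF _ open_UNIV deriv])
      (use minimizer in \<open>auto simp: power2_norm_eq_inner\<close>)
  then have "d \<bullet> d = 0" by metis
  then show ?thesis unfolding d_def by simp
qed

lemma prox_quadratic_minorant:
  fixes G :: "'a::real_inner \<Rightarrow> ereal"
  assumes gamma_pos: "\<gamma> > 0"
    and minimizer: "\<And>u. G Z + ereal ((1 / (2 * \<gamma>)) * (norm (Z - P))\<^sup>2) \<le> G u + ereal ((1 / (2 * \<gamma>)) * (norm (u - P))\<^sup>2)"
    and G_Z: "G Z = ereal g0"
    and G_not_MInf: "G u \<noteq> -\<infinity>"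
  shows "G u \<ge> ereal (g0 + ((1 / \<gamma>) *\<^sub>R (P - Z)) \<bullet> (u - Z) - (1 / (2 * \<gamma>)) * (norm (u - Z))\<^sup>2)"
proof (cases "G u")
  case (real gu)
  have "g0 + (1 / (2 * \<gamma>)) * (norm (Z - P))\<^sup>2 \<le> gu + (1 / (2 * \<gamma>)) * (norm (u - P))\<^sup>2"
    using minimizer[of u] real G_Z by simp
  moreover have "(1 / (2 * \<gamma>)) * (norm (Z - P))\<^sup>2 - (1 / (2 * \<gamma>)) * (norm (u - P))\<^sup>2
      = ((1 / \<gamma>) *\<^sub>R (P - Z)) \<bullet> (u - Z) - (1 / (2 * \<gamma>)) * (norm (u - Z))\<^sup>2"
    unfolding power2_norm_eq_inner using gamma_pos
    by (simp add: inner_diff_left inner_diff_right inner_commute field_simps)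
  ultimately show ?thesis using real by simp
qed (use G_not_MInf in auto)

lemma norm_adjoint_le:
  fixes f :: "'a::euclidean_space \<Rightarrow> 'a"
  assumes "linear f" and f_bound: "\<And>u. norm (f u) \<le> M * norm u" and "M \<ge> 0"
  shows "norm (adjoint f c) \<le> M * norm c"
proof (cases "adjoint f c = 0")
  case True
  then show ?thesis using assms by simp
next
  case False
  define a where "a = adjoint f c"
  have "(norm a)\<^sup>2 = f a \<bullet> c"
    unfolding a_def power2_norm_eq_inner using adjoint_works[OF assms(1)] by simp
  also have "\<dots> \<le> norm (f a) * norm c" by (rule norm_cauchy_schwarz)
  also have "\<dots> \<le> M * norm a * norm c" using f_bound[of a] by (simp add: mult_right_mono)
  finally have "norm a * norm a \<le> (M * norm c) * norm a"
    by (simp add: power2_eq_square algebra_simps)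
  moreover have "norm a > 0" using False a_def by simp
  ultimately show ?thesis unfolding a_def[symmetric] by simp
qed

definition Theta_smooth :: "('a::euclidean_space \<Rightarrow> real) \<Rightarrow> ('a \<Rightarrow> real) \<Rightarrow> ('a \<Rightarrow> 'a)
    \<Rightarrow> real \<Rightarrow> 'a \<times> 'a \<times> 'a \<Rightarrow> real" where
  "Theta_smooth F H gradH \<gamma> p = (case p of (x, y, z) \<Rightarrow>
     F y + H y
       + (1 / (2 * \<gamma>)) * (norm (2 *\<^sub>R y - z - x - \<gamma> *\<^sub>R gradH y))\<^sup>2
       - (1 / (2 * \<gamma>)) * (norm (x - y + \<gamma> *\<^sub>R gradH y))\<^sup>2
       - (1 / \<gamma>) * (norm (y - z))\<^sup>2)"

lemma Theta_eq_smooth_plus: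
  "Theta F G H gradH \<gamma> p = ereal (Theta_smooth F H gradH \<gamma> p) + G (snd (snd p))"
  unfolding Theta_def Theta_smooth_def by (simp split: prod.splits)

lemma Theta_smooth_has_derivative:
  fixes F H :: "'a::euclidean_space \<Rightarrow> real"
    and gradF gradH :: "'a \<Rightarrow> 'a"
    and hessH :: "'a \<Rightarrow> 'a \<Rightarrow>\<^sub>L 'a"
  assumes F_deriv: "\<And>u. (F has_derivative (\<lambda>h. gradF u \<bullet> h)) (at u)"
    and H_deriv: "\<And>u. (H has_derivative (\<lambda>h. gradH u \<bullet> h)) (at u)"
    and gradH_deriv: "\<And>u. (gradH has_derivative blinfun_apply (hessH u)) (at u)"
    and "\<gamma> \<noteq> 0"
  shows "(Theta_smooth F H gradH \<gamma> has_derivative (\<lambda>h.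
           ((1 / \<gamma>) *\<^sub>R (Z - Y),
            gradF Y + (1 / \<gamma>) *\<^sub>R (Y - X) - adjoint (hessH Y) (Y - Z),
            (1 / \<gamma>) *\<^sub>R (X - Z) + gradH Y) \<bullet> h)) (at (X, Y, Z))"
proof -
  let ?p = "(X, Y, Z)"
  have F_chain: "((\<lambda>q. F (f q)) has_derivative (\<lambda>h. gradF (f ?p) \<bullet> f' h)) (at ?p)"
    if "(f has_derivative f') (at ?p)" for f f'
    using has_derivative_compose[OF that F_deriv] .
  have H_chain: "((\<lambda>q. H (f q)) has_derivative (\<lambda>h. gradH (f ?p) \<bullet> f' h)) (at ?p)"
    if "(f has_derivative f') (at ?p)" for f f'
    using has_derivative_compose[OF that H_deriv] .
  have gradH_chain: "((\<lambda>q. gradH (f q)) has_derivative (\<lambda>h. hessH (f ?p) (f' h))) (at ?p)"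
    if "(f has_derivative f') (at ?p)" for f f'
    using has_derivative_compose[OF that gradH_deriv] .
  have lin: "linear (blinfun_apply (hessH Y))"
    by (simp add: blinfun.bounded_linear_right bounded_linear.linear)
  have adj: "hy \<bullet> adjoint (hessH Y) (Y - Z) = hessH Y hy \<bullet> Y - hessH Y hy \<bullet> Z" for hy
    using adjoint_works[OF lin, of hy "Y - Z"] by (simp add: inner_diff_right)
  define g where "g = ((1 / \<gamma>) *\<^sub>R (Z - Y),
      gradF Y + (1 / \<gamma>) *\<^sub>R (Y - X) - adjoint (hessH Y) (Y - Z),
      (1 / \<gamma>) *\<^sub>R (X - Z) + gradH Y)"
  define D where "D = (\<lambda>(hx, hy, hz).
       gradF Y \<bullet> hy + gradH Y \<bullet> hy
       + (1 / \<gamma>) * ((2 *\<^sub>R Y - Z - X - \<gamma> *\<^sub>R gradH Y) \<bullet> (2 *\<^sub>R hy - hz - hx - \<gamma> *\<^sub>R hessH Y hy))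
       - (1 / \<gamma>) * ((X - Y + \<gamma> *\<^sub>R gradH Y) \<bullet> (hx - hy + \<gamma> *\<^sub>R hessH Y hy))
       - (2 / \<gamma>) * ((Y - Z) \<bullet> (hy - hz)))"
  have "(Theta_smooth F H gradH \<gamma> has_derivative D) (at ?p)"
    unfolding Theta_smooth_def[abs_def] D_def case_prod_beta power2_norm_eq_inner
    apply (rule derivative_eq_intros F_chain H_chain gradH_chain refl | simp)+
    apply (rule ext)
    apply (simp add: inner_diff_left inner_diff_right inner_add_left inner_add_right inner_commute
        algebra_simps)
    apply (simp add: \<open>\<gamma> \<noteq> 0\<close> field_simps)
    done
  moreover have "D = (\<lambda>h. g \<bullet> h)"
  proof
    fix h :: "'a \<times> 'a \<times> 'a"
    obtain hx hy hz where h: "h = (hx, hy, hz)" by (cases h) auto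
    show "D h = g \<bullet> h"
      using \<open>\<gamma> \<noteq> 0\<close> unfolding h D_def g_def
      by (simp add: adj inner_commute inner_diff_left inner_add_left inner_diff_right
          inner_add_right field_simps)
  qed
  ultimately show ?thesis unfolding g_def by simp
qed


definition dys_subgradient :: "('a::euclidean_space \<Rightarrow> 'a \<Rightarrow>\<^sub>L 'a) \<Rightarrow> real \<Rightarrow> 'a \<Rightarrow> 'a \<Rightarrow> 'a \<times> 'a \<times> 'a" where
  "dys_subgradient hessH \<gamma> y z =
     ((1 / \<gamma>) *\<^sub>R (z - y), (1 / \<gamma>) *\<^sub>R (y - z) - adjoint (hessH y) (y - z), (1 / \<gamma>) *\<^sub>R (y - z))"

lemma dys_subgradient_in_limiting_subdiff:
  fixes F H :: "'a::euclidean_space \<Rightarrow> real"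
    and G :: "'a \<Rightarrow> ereal"
    and gradF gradH :: "'a \<Rightarrow> 'a"
    and hessH :: "'a \<Rightarrow> 'a \<Rightarrow>\<^sub>L 'a"
  assumes F_deriv: "\<And>u. (F has_derivative (\<lambda>h. gradF u \<bullet> h)) (at u)"
    and H_deriv: "\<And>u. (H has_derivative (\<lambda>h. gradH u \<bullet> h)) (at u)"
    and gradH_deriv: "\<And>u. (gradH has_derivative blinfun_apply (hessH u)) (at u)"
    and G_proper: "proper_fun G"
    and gamma_pos: "\<gamma> > 0"
    and y_min: "\<And>u. F Y + (1 / (2 * \<gamma>)) * (norm (Y - X0))\<^sup>2 \<le> F u + (1 / (2 * \<gamma>)) * (norm (u - X0))\<^sup>2"
    and z_min: "\<And>u. G Z + ereal ((1 / (2 * \<gamma>)) * (norm (Z - (2 *\<^sub>R Y - \<gamma> *\<^sub>R gradH Y - X0)))\<^sup>2)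
                   \<le> G u + ereal ((1 / (2 * \<gamma>)) * (norm (u - (2 *\<^sub>R Y - \<gamma> *\<^sub>R gradH Y - X0)))\<^sup>2)"
    and x_step: "X = X0 + (Z - Y)"
  shows "dys_subgradient hessH \<gamma> Y Z \<in> limiting_subdiff (Theta F G H gradH \<gamma>) (X, Y, Z)"
proof -
  let ?p = "(X, Y, Z)"
  define w where "w = (1 / \<gamma>) *\<^sub>R ((2 *\<^sub>R Y - \<gamma> *\<^sub>R gradH Y - X0) - Z)"
  have G_not_MInf: "G u \<noteq> -\<infinity>" for u
    using G_proper unfolding proper_fun_def by blast
  obtain u0 where "G u0 \<noteq> \<infinity>"
    using G_proper unfolding proper_fun_def by blast
  then have "G Z \<noteq> \<infinity>" using z_min[of u0] by auto
  then obtain g0 where g0: "G Z = ereal g0"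
    using G_not_MInf[of Z] by (cases "G Z") auto
  have R_minorant: "G (snd (snd q)) \<ge> ereal (g0 + (0, 0, w) \<bullet> (q - ?p) - (1 / (2 * \<gamma>)) * (norm (q - ?p))\<^sup>2)"
    for q :: "'a \<times> 'a \<times> 'a"
  proof -
    obtain a b c where q: "q = (a, b, c)" by (cases q) auto
    have "norm (c - Z) \<le> norm (q - ?p)"
      using norm_snd_le[where x = "a - X" and y = "(b - Y, c - Z)"] norm_snd_le[where x = "b - Y" and y = "c - Z"]
      by (simp add: q)
    then have "(1 / (2 * \<gamma>)) * (norm (c - Z))\<^sup>2 \<le> (1 / (2 * \<gamma>)) * (norm (q - ?p))\<^sup>2"
      using gamma_pos by (intro mult_left_mono power_mono) auto
    moreover have "G c \<ge> ereal (g0 + w \<bullet> (c - Z) - (1 / (2 * \<gamma>)) * (norm (c - Z))\<^sup>2)"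
      unfolding w_def by (rule prox_quadratic_minorant[OF gamma_pos z_min g0 G_not_MInf])
    moreover have "(0, 0, w) \<bullet> (q - ?p) = w \<bullet> (c - Z)"
      by (simp add: q)
    ultimately show ?thesis
      using order_trans[OF _ \<open>G c \<ge> _\<close>] by (simp add: q)
  qed
  have "frechet_subgrad (\<lambda>q. ereal (Theta_smooth F H gradH \<gamma> q) + G (snd (snd q))) ?p
      (((1 / \<gamma>) *\<^sub>R (Z - Y),
        gradF Y + (1 / \<gamma>) *\<^sub>R (Y - X) - adjoint (hessH Y) (Y - Z),
        (1 / \<gamma>) *\<^sub>R (X - Z) + gradH Y) + (0, 0, w))"
    using Theta_smooth_has_derivative[OF F_deriv H_deriv gradH_deriv, of \<gamma>] gamma_pos g0
    by (intro frechet_subgrad_add_quadratic_minorant[OF _ _ R_minorant]) simp_all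
  moreover have "gradF Y = (1 / \<gamma>) *\<^sub>R (X0 - Y)"
    by (rule prox_minimizer_gradient, rule F_deriv, rule gamma_pos, rule y_min)
  then have "((1 / \<gamma>) *\<^sub>R (Z - Y),
        gradF Y + (1 / \<gamma>) *\<^sub>R (Y - X) - adjoint (hessH Y) (Y - Z),
        (1 / \<gamma>) *\<^sub>R (X - Z) + gradH Y) + (0, 0, w) = dys_subgradient hessH \<gamma> Y Z"
    using gamma_pos unfolding dys_subgradient_def w_def x_step
    by (simp add: algebra_simps) (simp flip: scaleR_add_left add_divide_distrib)
  moreover have "Theta F G H gradH \<gamma> = (\<lambda>q. ereal (Theta_smooth F H gradH \<gamma> q) + G (snd (snd q)))"
    by (simp add: fun_eq_iff Theta_eq_smooth_plus)
  ultimately have "frechet_subgrad (Theta F G H gradH \<gamma>) ?p (dys_subgradient hessH \<gamma> Y Z)"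
    by simp
  then show ?thesis
    by (rule frechet_subgrad_imp_limiting_subdiff)
qed

lemma norm_dys_subgradient_le:
  assumes "\<gamma> > 0" and "norm (hessH y) \<le> M"
  shows "norm (dys_subgradient hessH \<gamma> y z) \<le> (3 / \<gamma> + M) * norm (y - z)"
proof -
  have "M \<ge> 0" using assms(2) norm_ge_zero order_trans by blast
  have "norm (hessH y u) \<le> M * norm u" for u
    using norm_blinfun[of "hessH y" u] assms(2) by (meson mult_right_mono norm_ge_zero order_trans)
  then have adjoint_le: "norm (adjoint (hessH y) (y - z)) \<le> M * norm (y - z)"
    by (intro norm_adjoint_le \<open>M \<ge> 0\<close>) (simp_all add: blinfun.bounded_linear_right bounded_linear.linear)
  let ?a = "(1 / \<gamma>) *\<^sub>R (z - y)" and ?b = "(1 / \<gamma>) *\<^sub>R (y - z) - adjoint (hessH y) (y - z)"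
    and ?c = "(1 / \<gamma>) *\<^sub>R (y - z)"
  have "norm (dys_subgradient hessH \<gamma> y z) \<le> norm ?a + (norm ?b + norm ?c)"
    unfolding dys_subgradient_def
    using norm_Pair_le[of ?a "(?b, ?c)"] norm_Pair_le[of ?b ?c] by linarith
  also have "\<dots> \<le> norm ?a + ((norm ?c + norm (adjoint (hessH y) (y - z))) + norm ?c)"
    using norm_triangle_ineq4[of ?c "adjoint (hessH y) (y - z)"] by simp
  also have "\<dots> = 3 * (norm (y - z) / \<gamma>) + norm (adjoint (hessH y) (y - z))"
    using assms(1) by (simp add: norm_minus_commute)
  also have "\<dots> \<le> (3 / \<gamma> + M) * norm (y - z)"
    using adjoint_le by (simp add: distrib_right)
  finally show ?thesis .
qed

lemma norm_forward_step_diff_le: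
  fixes f :: "'a::real_normed_vector \<Rightarrow> 'a"
  assumes "L-lipschitz_on UNIV f" and "\<gamma> \<ge> 0"
  shows "norm ((u + \<gamma> *\<^sub>R f u) - (v + \<gamma> *\<^sub>R f v)) \<le> (1 + \<gamma> * L) * norm (u - v)"
proof -
  have split: "(u + \<gamma> *\<^sub>R f u) - (v + \<gamma> *\<^sub>R f v) = (u - v) + \<gamma> *\<^sub>R (f u - f v)"
    by (simp add: algebra_simps)
  have "norm ((u + \<gamma> *\<^sub>R f u) - (v + \<gamma> *\<^sub>R f v)) \<le> norm (u - v) + \<gamma> * norm (f u - f v)"
    unfolding split using norm_triangle_ineq[of "u - v" "\<gamma> *\<^sub>R (f u - f v)"] assms(2) by simp
  also have "\<dots> \<le> norm (u - v) + \<gamma> * (L * norm (u - v))"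
    using lipschitz_onD[OF assms(1), of u v] assms(2)
    by (intro add_left_mono mult_left_mono) (auto simp: dist_norm)
  finally show ?thesis by (simp add: algebra_simps)
qed

theorem mainTheorem5:
  fixes F H :: "'a::euclidean_space \<Rightarrow> real"
    and G :: "'a \<Rightarrow> ereal"
    and gradF gradH :: "'a \<Rightarrow> 'a"
    and hessH :: "'a \<Rightarrow> 'a \<Rightarrow>\<^sub>L 'a"
    and L \<beta> M \<gamma> :: real
    and x y z :: "nat \<Rightarrow> 'a"
  assumes a1_grad: "\<And>u. (F has_derivative (\<lambda>h. gradF u \<bullet> h)) (at u)"
    and a1_lip: "L-lipschitz_on UNIV gradF"
    and a2_proper: "proper_fun G"
    and a2_lsc: "lsc_fun G"
    and a2_prox: "\<And>w (g::real). g > 0 \<Longrightarrow>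
        \<exists>v. \<forall>u. G v + ereal ((1 / (2 * g)) * (norm (v - w))\<^sup>2) \<le> G u + ereal ((1 / (2 * g)) * (norm (u - w))\<^sup>2)"
    and a3_grad: "\<And>u. (H has_derivative (\<lambda>h. gradH u \<bullet> h)) (at u)"
    and a3_lip: "\<beta>-lipschitz_on UNIV gradH"
    and hess: "\<And>u. (gradH has_derivative blinfun_apply (hessH u)) (at u)"
    and hess_cont: "continuous_on UNIV hessH"
    and M_pos: "M > 0"
    and hess_bound: "\<And>u. norm (hessH u) \<le> M"
    and gamma_pos: "\<gamma> > 0"
    and step_y: "\<And>t u. F (y (Suc t)) + (1 / (2 * \<gamma>)) * (norm (y (Suc t) - x t))\<^sup>2
                   \<le> F u + (1 / (2 * \<gamma>)) * (norm (u - x t))\<^sup>2"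
    and step_z: "\<And>t u. G (z (Suc t)) + ereal ((1 / (2 * \<gamma>)) *
                     (norm (z (Suc t) - (2 *\<^sub>R y (Suc t) - \<gamma> *\<^sub>R gradH (y (Suc t)) - x t)))\<^sup>2)
                   \<le> G u + ereal ((1 / (2 * \<gamma>)) *
                     (norm (u - (2 *\<^sub>R y (Suc t) - \<gamma> *\<^sub>R gradH (y (Suc t)) - x t)))\<^sup>2)"
    and step_x: "\<And>t. x (Suc t) = x t + (z (Suc t) - y (Suc t))"
  shows "\<exists>\<tau>>0. \<forall>t\<ge>1.
           limiting_subdiff (Theta F G H gradH \<gamma>) (x t, y t, z t) \<noteq> {} \<and>
           infdist 0 (limiting_subdiff (Theta F G H gradH \<gamma>) (x t, y t, z t))
             \<le> \<tau> * norm (y (Suc t) - y t)"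
proof -
  define \<tau> where "\<tau> = (3 / \<gamma> + M) * (1 + \<gamma> * L)"
  have "L \<ge> 0" using a1_lip by (rule lipschitz_on_nonneg)
  then have "\<tau> > 0"
    unfolding \<tau>_def using gamma_pos M_pos by (intro mult_pos_pos add_pos_nonneg) auto
  have x_eq: "x k = y (Suc k) + \<gamma> *\<^sub>R gradF (y (Suc k))" for k
  proof -
    have "gradF (y (Suc k)) = (1 / \<gamma>) *\<^sub>R (x k - y (Suc k))"
      by (rule prox_minimizer_gradient, rule a1_grad, rule gamma_pos, rule step_y)
    then show ?thesis using gamma_pos by simp
  qed
  have "limiting_subdiff (Theta F G H gradH \<gamma>) (x t, y t, z t) \<noteq> {} \<and>
      infdist 0 (limiting_subdiff (Theta F G H gradH \<gamma>) (x t, y t, z t)) \<le> \<tau> * norm (y (Suc t) - y t)"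
    if "t \<ge> 1" for t
  proof -
    obtain s where t: "t = Suc s" using \<open>t \<ge> 1\<close> by (cases t) auto
    let ?v = "dys_subgradient hessH \<gamma> (y t) (z t)"
    have v_in: "?v \<in> limiting_subdiff (Theta F G H gradH \<gamma>) (x t, y t, z t)"
      unfolding t using step_y step_z step_x
      by (intro dys_subgradient_in_limiting_subdiff[OF a1_grad a3_grad hess a2_proper gamma_pos])
    have "infdist 0 (limiting_subdiff (Theta F G H gradH \<gamma>) (x t, y t, z t)) \<le> norm ?v"
      using infdist_le[OF v_in, of 0] by simp
    also have "\<dots> \<le> (3 / \<gamma> + M) * norm (y t - z t)"
      by (rule norm_dys_subgradient_le[OF gamma_pos hess_bound])
    also have "y t - z t = x s - x t"
      using step_x[of s] by (simp add: t algebra_simps)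
    also have "(3 / \<gamma> + M) * norm (x s - x t) \<le> \<tau> * norm (y (Suc t) - y t)"
      using norm_forward_step_diff_le[OF a1_lip, of \<gamma> "y (Suc t)" "y t"] gamma_pos M_pos
      unfolding \<tau>_def x_eq[of t] x_eq[of s] t[symmetric] mult.assoc
      by (intro mult_left_mono) (auto simp: norm_minus_commute)
    finally show ?thesis using v_in by blast
  qed
  then show ?thesis using \<open>\<tau> > 0\<close> by blast
qed

end
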